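(* Let $C\in\mathbb R^{d\times d}$ satisfy Condition A and let $h(t):=\|e^{-Ct}\|_{\mathcal B(\mathbb R^d)}$. For each $m\ge1$ and each $D^{(m)}(0)\in F^{(m)}$, the solution $D^{(m)}(t)$ of $\dot D^{(m)}_\alpha=-\sum_{j,l=1}^d\alpha_jC_{jl}D^{(m)}_{(\alpha^{(j-)})^{(l+)}}$, $\alpha\in S^{(m)}$, satisfies $$\|D^{(m)}(t)\|_{\mathcal F}\le h(t)^m\|D^{(m)}(0)\|_{\mathcal F},\qquad t\ge0.$$ Moreover, $$\sup_{0\ne D^{(m)}(0)\in F^{(m)}}\frac{\|D^{(m)}(t)\|_{\mathcal F}}{\|D^{(m)}(0)\|_{\mathcal F}}=h(t)^m,\qquad t\ge 0.$$
   Context: $C_S=\frac12(C+C^T)$; Condition A: $C_S$ positive semi-definite and no non-trivial $C^T$-invariant subspace of $\ker C_S$. $\|e^{-Ct}\|_{\mathcal B(\mathbb R^d)}$ is the operator norm w.r.t. the Euclidean norm. $F^{(m)}$ is the space of symmetric $m$-tensors over $\mathbb R^d$ with Frobenius norm $\|A\|_{\mathcal F}=(\sum_{i_1,\dots,i_m=1}^dA_{i_1\dots i_m}^2)^{1/2}$. $S^{(m)}=\{\alpha\in\mathbb N_0^d:|\alpha|=m\}$; for $A\in F^{(m)}$, $A_\alpha:=A_{i_1\dots i_m}$ for any index with $\#\{r:i_r=k\}=\alpha_k$ for all $k$. $\alpha^{(l\pm)}_j=\alpha_j$ ($j\ne l$), $\alpha^{(l\pm)}_l=(\alpha_l\pm1)_+$.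 (This tensor ODE is the evolution of the rescaled Hermite coefficients $d_\alpha/\gamma_\alpha$, $\gamma_\alpha=m!/\alpha!$, of solutions of the Fokker–Planck equation $\partial_tf=\mathrm{div}_x(C_S\nabla_xf+Cxf)$.) *)

theory Defs
  imports "HOL-Analysis.Analysis" "HOL-Library.Multiset"
begin

(* Matrices are real^'n^'n; d = CARD('n). *)

primrec mat_pow :: "real^'n^'n \<Rightarrow> nat \<Rightarrow> real^'n^'n" where
  "mat_pow M 0 = mat 1"
| "mat_pow M (Suc k) = M ** mat_pow M k"

definition mat_exp :: "real^'n^'n \<Rightarrow> real^'n^'n" where
  "mat_exp M = (\<chi> i j. (\<Sum>k. (mat_pow M k $ i $ j) / fact k))"

definition sym_part :: "real^'n^'n \<Rightarrow> real^'n^'n" where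
  "sym_part C = (1/2) *\<^sub>R (C + transpose C)"

definition conditionA :: "real^'n^'n \<Rightarrow> bool" where
  "conditionA C \<longleftrightarrow>
     (\<forall>x. 0 \<le> x \<bullet> (sym_part C *v x)) \<and>
     (\<forall>V. subspace V \<longrightarrow> V \<subseteq> {x. sym_part C *v x = 0} \<longrightarrow>
          (\<forall>x\<in>V. transpose C *v x \<in> V) \<longrightarrow> V = {0})"

definition hnorm :: "real^'n^'n \<Rightarrow> real \<Rightarrow> real" where
  "hnorm C t = onorm (\<lambda>x. mat_exp (- (t *\<^sub>R C)) *v x)"

(* m-tensors over R^d: functions on index tuples (i_1,...,i_m), i.e. lists of length m.
   F^(m): symmetric m-tensors (zero off length-m lists). *)
definition sym_tensors :: "nat \<Rightarrow> ('n list \<Rightarrow> real) set" where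
  "sym_tensors m = {A. (\<forall>xs. length xs \<noteq> m \<longrightarrow> A xs = 0) \<and>
      (\<forall>xs ys. length xs = m \<longrightarrow> mset ys = mset xs \<longrightarrow> A ys = A xs)}"

definition frob :: "nat \<Rightarrow> ('n::finite list \<Rightarrow> real) \<Rightarrow> real" where
  "frob m A = sqrt (\<Sum>xs\<in>{xs. length xs = m}. (A xs)\<^sup>2)"

definition multi_idx :: "nat \<Rightarrow> ('n::finite \<Rightarrow> nat) set" where
  "multi_idx m = {\<alpha>. (\<Sum>k\<in>UNIV. \<alpha> k) = m}"

(* A_alpha := A_{i_1..i_m} for any index tuple with #{r. i_r = k} = alpha_k *)
definition tcomp :: "('n list \<Rightarrow> real) \<Rightarrow> ('n \<Rightarrow> nat) \<Rightarrow> real" where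
  "tcomp A \<alpha> = A (SOME xs. \<forall>k. count (mset xs) k = \<alpha> k)"

definition idx_plus :: "'n \<Rightarrow> ('n \<Rightarrow> nat) \<Rightarrow> ('n \<Rightarrow> nat)" where
  "idx_plus l \<alpha> = \<alpha>(l := \<alpha> l + 1)"

definition idx_minus :: "'n \<Rightarrow> ('n \<Rightarrow> nat) \<Rightarrow> ('n \<Rightarrow> nat)" where
  "idx_minus l \<alpha> = \<alpha>(l := \<alpha> l - 1)"

definition tensor_ode_sol :: "real^'n^'n \<Rightarrow> nat \<Rightarrow> (real \<Rightarrow> 'n::finite list \<Rightarrow> real) \<Rightarrow> bool" where
  "tensor_ode_sol C m D \<longleftrightarrow>
     (\<forall>t\<ge>0. D t \<in> sym_tensors m) \<and>
     (\<forall>\<alpha>\<in>multi_idx m. \<forall>t\<ge>0.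
        ((\<lambda>s. tcomp (D s) \<alpha>) has_real_derivative
           (- (\<Sum>j\<in>UNIV. \<Sum>l\<in>UNIV.
                 real (\<alpha> j) * C $ j $ l * tcomp (D t) (idx_plus l (idx_minus j \<alpha>)))))
        (at t within {0..}))"

end

theory Submission
  imports Defs
begin

text \<open>On symmetric tensors the
  multi-index equation becomes \<open>D' = - L D\<close>, where \<open>L\<close> lets \<open>C\<close> act on each slot in turn. This is
  the equation solved by \<open>(e\<^sup>-\<^sup>C\<^sup>t)\<^sup>\<otimes>\<^sup>m D(0)\<close>, and an energy estimate shows it has no other
  solution. Applying \<open>\<parallel>e\<^sup>-\<^sup>C\<^sup>t x\<parallel> \<le> h(t) \<parallel>x\<parallel>\<close> one slot at a time bounds the Frobenius norm of
  \<open>(e\<^sup>-\<^sup>C\<^sup>t)\<^sup>\<otimes>\<^sup>m D(0)\<close> by \<open>h(t)\<^sup>m \<parallel>D(0)\<parallel>\<close>. The bound is sharp because rank-one data \<open>v\<^sup>\<otimes>\<^sup>m\<close>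
  evolve into \<open>(e\<^sup>-\<^sup>C\<^sup>t v)\<^sup>\<otimes>\<^sup>m\<close>, with norm ratio \<open>(\<parallel>e\<^sup>-\<^sup>C\<^sup>t v\<parallel> / \<parallel>v\<parallel>)\<^sup>m\<close>.\<close>

section \<open>Matrix exponential\<close>

lemma mat_pow_scaleR: "mat_pow (c *\<^sub>R M) k = c ^ k *\<^sub>R mat_pow M k"
  by (induction k) (simp_all add: scalar_matrix_assoc[symmetric] matrix_scalar_ac)

lemma mat_pow_Suc_nth: "mat_pow M (Suc k) $ i $ j = (\<Sum>l\<in>UNIV. M $ i $ l * mat_pow M k $ l $ j)"
  by (simp add: matrix_matrix_mult_def)

definition entrywise_l1 :: "real^'n^'n \<Rightarrow> real" where
  "entrywise_l1 M = (\<Sum>i\<in>UNIV. \<Sum>l\<in>UNIV. \<bar>M $ i $ l\<bar>)"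

lemma row_abs_sum_le_entrywise_l1: "(\<Sum>l\<in>UNIV. \<bar>M $ i $ l\<bar>) \<le> entrywise_l1 M"
  unfolding entrywise_l1_def
  by (rule member_le_sum[where f = "\<lambda>i. \<Sum>l\<in>UNIV. \<bar>M $ i $ l\<bar>"]) (auto intro: sum_nonneg)

lemma entrywise_l1_nonneg: "0 \<le> entrywise_l1 M"
  unfolding entrywise_l1_def by (auto intro: sum_nonneg)

lemma abs_mat_pow_nth_le: "\<bar>mat_pow M k $ i $ j\<bar> \<le> entrywise_l1 M ^ k"
proof (induction k arbitrary: i j)
  case 0
  then show ?case by (simp add: mat_def)
next
  case (Suc k)
  have "\<bar>mat_pow M (Suc k) $ i $ j\<bar> \<le> (\<Sum>l\<in>UNIV. \<bar>M $ i $ l\<bar> * \<bar>mat_pow M k $ l $ j\<bar>)"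
    unfolding mat_pow_Suc_nth by (rule order_trans[OF sum_abs]) (simp add: abs_mult)
  also have "\<dots> \<le> (\<Sum>l\<in>UNIV. \<bar>M $ i $ l\<bar>) * entrywise_l1 M ^ k"
    unfolding sum_distrib_right by (intro sum_mono mult_left_mono Suc.IH) simp
  also have "\<dots> \<le> entrywise_l1 M * entrywise_l1 M ^ k"
    by (intro mult_right_mono row_abs_sum_le_entrywise_l1 zero_le_power entrywise_l1_nonneg)
  finally show ?case by simp
qed

lemma summable_mat_exp_nth: "summable (\<lambda>k. mat_pow M k $ i $ j / fact k * t ^ k)"
proof (rule summable_comparison_test)
  show "summable (\<lambda>k. (entrywise_l1 M * \<bar>t\<bar>) ^ k /\<^sub>R fact k)"
    by (rule summable_exp_generic)
  show "\<exists>N. \<forall>k\<ge>N. norm (mat_pow M k $ i $ j / fact k * t ^ k) \<le> (entrywise_l1 M * \<bar>t\<bar>) ^ k /\<^sub>R fact k"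
    by (auto simp: abs_mult power_abs power_mult_distrib divide_inverse
        intro!: mult_right_mono abs_mat_pow_nth_le)
qed

lemma mat_exp_scaleR_nth: "mat_exp (t *\<^sub>R M) $ i $ j = (\<Sum>k. mat_pow M k $ i $ j / fact k * t ^ k)"
  by (simp add: mat_exp_def mat_pow_scaleR mult.commute)

lemma mat_exp_zero: "mat_exp 0 = (mat 1 :: real^'n^'n)"
proof -
  have "mat_exp (0 *\<^sub>R mat 1) $ i $ j = (mat 1 :: real^'n^'n) $ i $ j" for i j
    unfolding mat_exp_scaleR_nth using powser_zero[of "\<lambda>k. mat_pow (mat 1) k $ i $ j / fact k"] by simp
  then show ?thesis by (simp add: vec_eq_iff)
qed

lemma has_real_derivative_mat_exp_nth:
  "((\<lambda>t. mat_exp (t *\<^sub>R M) $ i $ j) has_real_derivative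
      (\<Sum>l\<in>UNIV. M $ i $ l * mat_exp (t *\<^sub>R M) $ l $ j)) (at t)"
proof -
  let ?c = "\<lambda>i j k. mat_pow M k $ i $ j / fact k"
  have "((\<lambda>t. \<Sum>k. ?c i j k * t ^ k) has_real_derivative (\<Sum>k. diffs (?c i j) k * t ^ k)) (at t)"
    by (rule termdiffs_strong_converges_everywhere) (rule summable_mat_exp_nth)
  moreover have "diffs (?c i j) k * t ^ k = (\<Sum>l\<in>UNIV. M $ i $ l * (?c l j k * t ^ k))" for k
    unfolding diffs_def mat_pow_Suc_nth
    by (simp add: sum_distrib_left sum_divide_distrib field_simps fact_Suc del: of_nat_Suc)
  moreover have "(\<Sum>k. \<Sum>l\<in>UNIV. M $ i $ l * (?c l j k * t ^ k)) = (\<Sum>l\<in>UNIV. M $ i $ l * (\<Sum>k. ?c l j k * t ^ k))"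
    by (simp only: suminf_sum[OF summable_mult[OF summable_mat_exp_nth]] suminf_mult[OF summable_mat_exp_nth])
  ultimately show ?thesis
    by (simp add: mat_exp_scaleR_nth)
qed

definition propagator :: "real^'n^'n \<Rightarrow> real \<Rightarrow> real^'n^'n" where
  "propagator C t = mat_exp (- (t *\<^sub>R C))"

lemma propagator_0: "propagator C 0 = mat 1"
  by (simp add: propagator_def mat_exp_zero)

lemma has_real_derivative_propagator_nth:
  "((\<lambda>t. propagator C t $ i $ j) has_real_derivative - (\<Sum>l\<in>UNIV. C $ i $ l * propagator C t $ l $ j)) (at t)"
  using has_real_derivative_mat_exp_nth[of "-C" i j t]
  by (simp add: propagator_def sum_negf)

lemma hnorm_eq_onorm_propagator: "hnorm C t = onorm (\<lambda>x. propagator C t *v x)"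
  by (simp add: hnorm_def propagator_def)

lemma hnorm_nonneg: "0 \<le> hnorm C t"
  unfolding hnorm_eq_onorm_propagator by (rule onorm_pos_le) simp

section \<open>Tensor powers of a matrix\<close>

lemma sum_lists_length_Suc:
  "(\<Sum>xs | length xs = Suc m. f xs) = (\<Sum>x\<in>UNIV. \<Sum>xs | length xs = m. f (x # (xs :: 'n::finite list)))"
proof -
  have lists_Suc: "{xs :: 'n list. length xs = Suc m} = case_prod Cons ` (UNIV \<times> {xs. length xs = m})"
    by (auto simp: length_Suc_conv image_def)
  have "inj_on (case_prod Cons) (UNIV \<times> {xs :: 'n list. length xs = m})"
    by (auto simp: inj_on_def)
  then show ?thesis
    unfolding lists_Suc by (simp add: sum.reindex sum.cartesian_product split_def)
qed

lemma sum_lists_length_prod_list: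
  "(\<Sum>xs | length xs = m. prod_list (map f xs)) = (\<Sum>x\<in>(UNIV :: 'n::finite set). f x :: real) ^ m"
  by (induction m) (simp_all add: sum_lists_length_Suc sum_distrib_right flip: sum_distrib_left)

lemma finite_lists_length: "finite {xs :: 'n::finite list. length xs = m}"
  using finite_lists_length_eq[of "UNIV :: 'n set" m] by simp

lemma power2_norm_vec_eq_sum: "(norm (w :: real^'n))\<^sup>2 = (\<Sum>j\<in>UNIV. (w $ j)\<^sup>2)"
  unfolding power2_norm_eq_inner inner_vec_def by (simp add: power2_eq_square)

primrec tensor_power_apply :: "real^'n^'n \<Rightarrow> ('n::finite list \<Rightarrow> real) \<Rightarrow> 'n list \<Rightarrow> real" where
  "tensor_power_apply A X [] = X []"
| "tensor_power_apply A X (x # xs) = (\<Sum>y\<in>UNIV. A $ x $ y * tensor_power_apply A (\<lambda>ys. X (y # ys)) xs)"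

lemma tensor_power_apply_mat_1: "tensor_power_apply (mat 1) X xs = X xs"
  by (induction xs arbitrary: X) (simp_all add: mat_def if_distrib[of "\<lambda>c. c * _"] cong: if_cong)

lemma tensor_power_apply_cmult: "tensor_power_apply A (\<lambda>ys. c * X ys) xs = c * tensor_power_apply A X xs"
  by (induction xs arbitrary: X) (simp_all add: sum_distrib_left algebra_simps)

lemma tensor_power_apply_prod_list:
  "tensor_power_apply A (\<lambda>ys. prod_list (map (\<lambda>y. v $ y) ys)) xs = prod_list (map (\<lambda>x. (A *v v) $ x) xs)"
  by (induction xs) (simp_all add: tensor_power_apply_cmult matrix_vector_mult_def sum_distrib_right algebra_simps)

lemma sum_sq_matrix_vector_le_onorm:
  fixes A :: "real^'n^'m"
  shows "(\<Sum>i\<in>UNIV. (\<Sum>j\<in>UNIV. A $ i $ j * v j)\<^sup>2) \<le> (onorm (\<lambda>x. A *v x))\<^sup>2 * (\<Sum>j\<in>UNIV. (v j)\<^sup>2)"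
proof -
  let ?w = "\<chi> j. v j"
  have "norm (A *v ?w) \<le> onorm (\<lambda>x. A *v x) * norm ?w"
    by (rule onorm) simp
  then have "(norm (A *v ?w))\<^sup>2 \<le> (onorm (\<lambda>x. A *v x) * norm ?w)\<^sup>2"
    by (rule power_mono) simp
  then show ?thesis
    by (simp add: power2_norm_vec_eq_sum power_mult_distrib matrix_vector_mult_def)
qed

text \<open>Contract the first slot with the operator bound for \<open>A\<close>, the others by induction.\<close>

lemma sum_sq_tensor_power_apply_le:
  fixes A :: "real^'n^'n"
  shows "(\<Sum>xs | length xs = m. (tensor_power_apply A X xs)\<^sup>2)
           \<le> ((onorm (\<lambda>x. A *v x))\<^sup>2) ^ m * (\<Sum>xs | length xs = m. (X xs)\<^sup>2)"
proof (induction m arbitrary: X)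
  case 0
  then show ?case by simp
next
  case (Suc m)
  let ?h = "(onorm (\<lambda>x. A *v x))\<^sup>2"
  let ?T = "\<lambda>y. tensor_power_apply A (\<lambda>ys. X (y # ys))"
  have "(\<Sum>xs | length xs = Suc m. (tensor_power_apply A X xs)\<^sup>2)
        = (\<Sum>xs | length xs = m. \<Sum>x\<in>UNIV. (\<Sum>y\<in>UNIV. A $ x $ y * ?T y xs)\<^sup>2)"
    unfolding sum_lists_length_Suc by (simp add: sum.swap[where A = UNIV])
  also have "\<dots> \<le> (\<Sum>xs | length xs = m. ?h * (\<Sum>y\<in>UNIV. (?T y xs)\<^sup>2))"
    by (intro sum_mono sum_sq_matrix_vector_le_onorm)
  also have "\<dots> = ?h * (\<Sum>y\<in>UNIV. \<Sum>xs | length xs = m. (?T y xs)\<^sup>2)"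
    by (simp add: sum_distrib_left sum.swap[where B = UNIV])
  also have "\<dots> \<le> ?h * (\<Sum>y\<in>UNIV. ?h ^ m * (\<Sum>xs | length xs = m. (X (y # xs))\<^sup>2))"
    by (intro mult_left_mono sum_mono Suc.IH) simp
  also have "\<dots> = ?h ^ Suc m * (\<Sum>xs | length xs = Suc m. (X xs)\<^sup>2)"
    by (simp add: sum_lists_length_Suc sum_distrib_left mult.assoc)
  finally show ?case .
qed

lemma frob_tensor_power_apply_le:
  fixes A :: "real^'n^'n"
  shows "frob m (tensor_power_apply A X) \<le> onorm (\<lambda>x. A *v x) ^ m * frob m X"
proof -
  have "frob m (tensor_power_apply A X) \<le> sqrt (((onorm (\<lambda>x. A *v x))\<^sup>2) ^ m * (\<Sum>xs | length xs = m. (X xs)\<^sup>2))"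
    unfolding frob_def by (rule real_sqrt_le_mono sum_sq_tensor_power_apply_le)+
  also have "\<dots> = onorm (\<lambda>x. A *v x) ^ m * frob m X"
  proof -
    have "((onorm (\<lambda>x. A *v x))\<^sup>2) ^ m = (onorm (\<lambda>x. A *v x) ^ m)\<^sup>2"
      by (simp flip: power_mult add: mult.commute)
    then show ?thesis
      by (simp add: frob_def real_sqrt_mult onorm_pos_le)
  qed
  finally show ?thesis .
qed

text \<open>\<open>tensor_gen C X xs = (\<Sum>r<length xs. \<Sum>l. C $ (xs ! r) $ l * X (xs[r := l]))\<close>: the matrix \<open>C\<close>
  acting on each slot in turn, which is minus the generator of \<open>t \<mapsto> (e\<^sup>-\<^sup>C\<^sup>t)\<^sup>\<otimes>\<^sup>m\<close>.\<close>

primrec tensor_gen :: "real^'n^'n \<Rightarrow> ('n::finite list \<Rightarrow> real) \<Rightarrow> 'n list \<Rightarrow> real" where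
  "tensor_gen C X [] = 0"
| "tensor_gen C X (x # xs) = (\<Sum>l\<in>UNIV. C $ x $ l * X (l # xs)) + tensor_gen C (\<lambda>ys. X (x # ys)) xs"

lemma tensor_gen_sum_cmult:
  "tensor_gen C (\<lambda>ys. \<Sum>y\<in>S. c y * F y ys) xs = (\<Sum>y\<in>S. c y * tensor_gen C (F y) xs)"
proof (induction xs arbitrary: F)
  case Nil
  then show ?case by simp
next
  case (Cons x xs)
  have "(\<Sum>l\<in>UNIV. C $ x $ l * (\<Sum>y\<in>S. c y * F y (l # xs))) = (\<Sum>y\<in>S. c y * (\<Sum>l\<in>UNIV. C $ x $ l * F y (l # xs)))"
    by (simp add: sum_distrib_left mult.left_commute) (rule sum.swap)
  then show ?case
    using Cons.IH[of "\<lambda>y ys. F y (x # ys)"] by (simp add: sum.distrib distrib_left)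
qed

lemma tensor_gen_diff: "tensor_gen C (\<lambda>ys. X ys - Y ys) xs = tensor_gen C X xs - tensor_gen C Y xs"
  by (induction xs arbitrary: X Y) (simp_all add: sum_subtractf right_diff_distrib)

lemma tensor_gen_cong:
  "(\<And>ys. length ys = length xs \<Longrightarrow> X ys = Y ys) \<Longrightarrow> tensor_gen C X xs = tensor_gen C Y xs"
proof (induction xs arbitrary: X Y)
  case (Cons x xs)
  have "tensor_gen C (\<lambda>ys. X (x # ys)) xs = tensor_gen C (\<lambda>ys. Y (x # ys)) xs"
    by (rule Cons.IH) (simp add: Cons.prems)
  with Cons.prems show ?case
    by simp
qed simp

lemma abs_tensor_gen_le:
  assumes "\<And>ys. length ys = length xs \<Longrightarrow> \<bar>X ys\<bar> \<le> M"
  shows "\<bar>tensor_gen C X xs\<bar> \<le> length xs * entrywise_l1 C * M"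
  using assms
proof (induction xs arbitrary: X)
  case Nil
  then show ?case by simp
next
  case (Cons x xs)
  have "\<bar>\<Sum>l\<in>UNIV. C $ x $ l * X (l # xs)\<bar> \<le> (\<Sum>l\<in>UNIV. \<bar>C $ x $ l\<bar>) * M"
    unfolding sum_distrib_right
    by (rule order_trans[OF sum_abs], rule sum_mono) (simp add: abs_mult mult_left_mono Cons.prems)
  also have "\<dots> \<le> entrywise_l1 C * M"
    using Cons.prems[of "x # xs"] by (intro mult_right_mono row_abs_sum_le_entrywise_l1) auto
  finally show ?case
    using Cons.IH[of "\<lambda>ys. X (x # ys)"] Cons.prems by (simp add: algebra_simps)
qed

lemma has_real_derivative_tensor_power_apply:
  assumes "\<And>i j t. ((\<lambda>t. E t $ i $ j) has_real_derivative - (\<Sum>l\<in>UNIV. C $ i $ l * E t $ l $ j)) (at t)"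
  shows "((\<lambda>t. tensor_power_apply (E t) X xs) has_real_derivative
           - tensor_gen C (tensor_power_apply (E t) X) xs) (at t)"
proof (induction xs arbitrary: X)
  case Nil
  then show ?case by simp
next
  case (Cons x xs)
  let ?T = "\<lambda>y. tensor_power_apply (E t) (\<lambda>ys. X (y # ys))"
  have "((\<lambda>t. tensor_power_apply (E t) X (x # xs)) has_real_derivative
     (\<Sum>y\<in>UNIV. - (\<Sum>l\<in>UNIV. C $ x $ l * E t $ l $ y) * ?T y xs - tensor_gen C (?T y) xs * E t $ x $ y)) (at t)"
    by (auto intro!: derivative_eq_intros assms Cons.IH)
  moreover have "(\<Sum>y\<in>UNIV. (\<Sum>l\<in>UNIV. C $ x $ l * E t $ l $ y) * ?T y xs)
                 = (\<Sum>l\<in>UNIV. C $ x $ l * tensor_power_apply (E t) X (l # xs))"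
    by (simp add: sum_distrib_left sum_distrib_right mult.assoc) (rule sum.swap)
  moreover have "(\<Sum>y\<in>UNIV. tensor_gen C (?T y) xs * E t $ x $ y)
                 = tensor_gen C (\<lambda>ys. tensor_power_apply (E t) X (x # ys)) xs"
    by (simp add: tensor_gen_sum_cmult mult.commute)
  ultimately show ?case
    by (simp add: sum_subtractf sum_negf)
qed

section \<open>The multi-index equation\<close>

lemma mset_Cons_remove1_Cons:
  "j \<in> set xs \<Longrightarrow> mset (l # remove1 j (x # xs)) = mset (x # l # remove1 j xs)"
  by (cases "j = x") (auto simp: insert_DiffM)

text \<open>On a symmetric tensor, the replacement of slot \<open>r\<close> only depends on the index \<open>j = xs ! r\<close>
  it removes, so the positions carrying the same index \<open>j\<close> merge into the weight \<open>count (mset xs) j\<close>.\<close>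

lemma tensor_gen_symmetric:
  assumes "\<And>ys zs. mset ys = mset zs \<Longrightarrow> X ys = X zs"
  shows "tensor_gen C X xs
           = (\<Sum>j\<in>UNIV. \<Sum>l\<in>UNIV. real (count (mset xs) j) * C $ j $ l * X (l # remove1 j xs))"
  using assms
proof (induction xs arbitrary: X)
  case Nil
  show ?case by simp
next
  case (Cons x xs)
  have IH: "tensor_gen C (\<lambda>ys. X (x # ys)) xs
      = (\<Sum>j\<in>UNIV. \<Sum>l\<in>UNIV. real (count (mset xs) j) * C $ j $ l * X (x # l # remove1 j xs))"
    by (rule Cons.IH, rule Cons.prems) simp
  have slot: "real (count (mset (x # xs)) j) * C $ j $ l * X (l # remove1 j (x # xs))
      = (if j = x then C $ x $ l * X (l # xs) else 0)
        + real (count (mset xs) j) * C $ j $ l * X (x # l # remove1 j xs)" for j l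
  proof (cases "j \<in> set xs")
    case True
    then have "X (l # remove1 j (x # xs)) = X (x # l # remove1 j xs)"
      by (intro Cons.prems mset_Cons_remove1_Cons)
    then show ?thesis
      by (cases "j = x") (simp_all add: algebra_simps)
  next
    case False
    then show ?thesis
      by (cases "j = x") (simp_all add: count_mset_0_iff[THEN iffD2])
  qed
  show ?case
    unfolding slot sum.distrib IH[symmetric] by (subst sum.swap) simp
qed

lemma tcomp_eq:
  assumes "\<And>ys zs. mset ys = mset zs \<Longrightarrow> A ys = A zs"
  shows "tcomp A (count (mset xs)) = A xs"
proof -
  have "\<exists>ys. \<forall>k. count (mset ys) k = count (mset xs) k"
    by blast
  then have "\<forall>k. count (mset (SOME ys. \<forall>k. count (mset ys) k = count (mset xs) k)) k = count (mset xs) k"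
    by (rule someI_ex)
  then have "mset (SOME ys. \<forall>k. count (mset ys) k = count (mset xs) k) = mset xs"
    by (simp add: multiset_eq_iff)
  then show ?thesis
    unfolding tcomp_def by (rule assms)
qed

lemma sum_count_mset_eq_length: "(\<Sum>k\<in>UNIV. count (mset xs) k) = length (xs :: 'n::finite list)"
  by (simp add: count_mset sum_count_set)

lemma multi_idx_eq_count_mset: "multi_idx m = {count (mset xs) | xs :: 'n::finite list. length xs = m}"
proof -
  have "\<exists>xs :: 'n list. count (mset xs) = \<alpha>" for \<alpha>
  proof -
    obtain xs where "mset xs = Abs_multiset \<alpha>"
      using ex_mset by blast
    moreover have "count (Abs_multiset \<alpha>) = \<alpha>"
      by (rule count_Abs_multiset) simp
    ultimately show ?thesis
      by metis
  qed
  then show ?thesis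
    unfolding multi_idx_def by (auto simp: sum_count_mset_eq_length) (metis sum_count_mset_eq_length)
qed

lemma idx_plus_idx_minus_count:
  assumes "j \<in> set xs"
  shows "idx_plus l (idx_minus j (count (mset xs))) = count (mset (l # remove1 j xs))"
proof
  fix k
  have "0 < count (mset xs) j"
    using assms by (rule count_mset_gt_0)
  then show "idx_plus l (idx_minus j (count (mset xs))) k = count (mset (l # remove1 j xs)) k"
    unfolding idx_plus_def idx_minus_def by (cases "k = l"; cases "k = j") auto
qed

lemma multi_idx_rhs_eq_tensor_gen:
  assumes "\<And>ys zs. mset ys = mset zs \<Longrightarrow> A ys = A zs"
  shows "(\<Sum>j\<in>UNIV. \<Sum>l\<in>UNIV. real (count (mset xs) j) * C $ j $ l
            * tcomp A (idx_plus l (idx_minus j (count (mset xs))))) = tensor_gen C A xs"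
proof -
  have slot: "real (count (mset xs) j) * C $ j $ l * tcomp A (idx_plus l (idx_minus j (count (mset xs))))
        = real (count (mset xs) j) * C $ j $ l * A (l # remove1 j xs)" for j l
    using tcomp_eq[OF assms, where xs = "l # remove1 j xs"] idx_plus_idx_minus_count[of j xs l]
    by (cases "j \<in> set xs") simp_all
  show ?thesis
    unfolding slot by (rule tensor_gen_symmetric[OF assms, symmetric])
qed

lemma sym_tensors_mset_eq:
  assumes "A \<in> sym_tensors m" and "mset ys = mset zs"
  shows "A ys = A zs"
proof (cases "length zs = m")
  case True
  then show ?thesis
    using assms unfolding sym_tensors_def by blast
next
  case False
  moreover have "length ys = length zs"
    using \<open>mset ys = mset zs\<close> by (metis size_mset)
  ultimately show ?thesis
    using assms(1) unfolding sym_tensors_def by auto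
qed

lemma tensor_ode_sol_iff:
  "tensor_ode_sol C m D \<longleftrightarrow>
     (\<forall>t\<ge>0. D t \<in> sym_tensors m) \<and>
     (\<forall>xs t. length xs = m \<longrightarrow> 0 \<le> t \<longrightarrow>
        ((\<lambda>s. D s xs) has_real_derivative - tensor_gen C (D t) xs) (at t within {0..}))"
proof -
  have "((\<lambda>s. tcomp (D s) (count (mset xs))) has_real_derivative
          - (\<Sum>j\<in>UNIV. \<Sum>l\<in>UNIV. real (count (mset xs) j) * C $ j $ l
               * tcomp (D t) (idx_plus l (idx_minus j (count (mset xs)))))) (at t within {0..})
        \<longleftrightarrow> ((\<lambda>s. D s xs) has_real_derivative - tensor_gen C (D t) xs) (at t within {0..})"
    if sym: "\<forall>s\<ge>0. D s \<in> sym_tensors m" and t: "0 \<le> t" for xs t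
  proof -
    have tcomp_D: "tcomp (D s) (count (mset xs)) = D s xs" if "0 \<le> s" for s
      using sym that by (auto intro: tcomp_eq sym_tensors_mset_eq)
    have "eventually (\<lambda>s. tcomp (D s) (count (mset xs)) = D s xs) (at t within {0..})"
      by (auto simp: eventually_at_filter tcomp_D intro!: always_eventually)
    moreover have "(\<Sum>j\<in>UNIV. \<Sum>l\<in>UNIV. real (count (mset xs) j) * C $ j $ l
               * tcomp (D t) (idx_plus l (idx_minus j (count (mset xs))))) = tensor_gen C (D t) xs"
      by (rule multi_idx_rhs_eq_tensor_gen, rule sym_tensors_mset_eq) (use sym t in auto)
    ultimately show ?thesis
      by (simp add: has_field_derivative_cong_eventually tcomp_D t)
  qed
  then show ?thesis
    unfolding tensor_ode_sol_def multi_idx_eq_count_mset by blast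
qed

lemma gronwall_vanishing:
  fixes Q :: "real \<Rightarrow> real"
  assumes deriv: "\<And>s. 0 \<le> s \<Longrightarrow> (Q has_real_derivative Q' s) (at s within {0..})"
    and growth: "\<And>s. 0 \<le> s \<Longrightarrow> Q' s \<le> K * Q s"
    and nonneg: "\<And>s. 0 \<le> s \<Longrightarrow> 0 \<le> Q s"
    and "Q 0 = 0" and "0 \<le> t"
  shows "Q t = 0"
proof -
  define g where "g s = Q s * exp (- K * s)" for s
  have g_deriv: "(g has_real_derivative (Q' s - K * Q s) * exp (- K * s)) (at s within {0..})"
    if "0 \<le> s" for s
    unfolding g_def by (auto intro!: derivative_eq_intros deriv that simp: algebra_simps)
  have "g t \<le> g 0"
  proof (rule DERIV_nonpos_imp_decreasing_open[OF \<open>0 \<le> t\<close>])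
    fix s :: real
    assume "0 < s" "s < t"
    then have "at s within {0..} = at s"
      by (intro at_within_interior) auto
    then show "\<exists>y. (g has_real_derivative y) (at s) \<and> y \<le> 0"
      using g_deriv[of s] growth[of s] \<open>0 < s\<close> by (auto intro!: mult_nonpos_nonneg)
  next
    show "continuous_on {0..t} g"
      by (rule DERIV_continuous_on, rule has_field_derivative_subset[OF g_deriv]) auto
  qed
  then show ?thesis
    using nonneg[OF \<open>0 \<le> t\<close>] \<open>Q 0 = 0\<close> by (simp add: g_def mult_le_0_iff)
qed

lemma neg_sum_mult_tensor_gen_le:
  fixes X :: "'n::finite list \<Rightarrow> real" and m :: nat
  defines "L \<equiv> {xs :: 'n list. length xs = m}"
  shows "- (\<Sum>xs\<in>L. X xs * tensor_gen C X xs) \<le> card L * m * entrywise_l1 C * (\<Sum>xs\<in>L. (X xs)\<^sup>2)"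
proof -
  let ?Q = "\<Sum>xs\<in>L. (X xs)\<^sup>2"
  have finite_L: "finite L"
    unfolding L_def by (rule finite_lists_length)
  have X_le: "\<bar>X ys\<bar> \<le> sqrt ?Q" if "ys \<in> L" for ys
    using member_le_sum[of ys L "\<lambda>ys. (X ys)\<^sup>2"] finite_L that by (simp add: real_le_rsqrt)
  have "- (X xs * tensor_gen C X xs) \<le> m * entrywise_l1 C * ?Q" if "xs \<in> L" for xs
  proof -
    have "\<bar>tensor_gen C X xs\<bar> \<le> length xs * entrywise_l1 C * sqrt ?Q"
      by (rule abs_tensor_gen_le) (use that X_le in \<open>auto simp: L_def\<close>)
    with that have "\<bar>tensor_gen C X xs\<bar> \<le> m * entrywise_l1 C * sqrt ?Q"
      by (simp add: L_def)
    then have "\<bar>X xs\<bar> * \<bar>tensor_gen C X xs\<bar> \<le> sqrt ?Q * (m * entrywise_l1 C * sqrt ?Q)"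
      by (intro mult_mono X_le that) (auto intro: sum_nonneg)
    then show ?thesis
      by (simp add: abs_mult[symmetric] sum_nonneg algebra_simps)
  qed
  then have "(\<Sum>xs\<in>L. - (X xs * tensor_gen C X xs)) \<le> card L * (m * entrywise_l1 C * ?Q)"
    by (rule sum_bounded_above)
  then show ?thesis
    by (simp add: sum_negf algebra_simps)
qed

lemma tensor_gen_ode_unique:
  fixes X :: "real \<Rightarrow> 'n::finite list \<Rightarrow> real"
  assumes deriv: "\<And>xs t. length xs = m \<Longrightarrow> 0 \<le> t \<Longrightarrow>
      ((\<lambda>s. X s xs) has_real_derivative - tensor_gen C (X t) xs) (at t within {0..})"
    and initial: "\<And>xs. length xs = m \<Longrightarrow> X 0 xs = 0"
    and "0 \<le> t" and "length xs = m"
  shows "X t xs = 0"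
proof -
  define L where "L = {xs :: 'n list. length xs = m}"
  define Q where "Q s = (\<Sum>ys\<in>L. (X s ys)\<^sup>2)" for s
  have finite_L: "finite L"
    unfolding L_def by (rule finite_lists_length)
  have "Q t = 0"
  proof (rule gronwall_vanishing[where Q = Q and Q' = "\<lambda>s. - 2 * (\<Sum>ys\<in>L. X s ys * tensor_gen C (X s) ys)"
                                    and K = "2 * (card L * m * entrywise_l1 C)"])
    show "(Q has_real_derivative - 2 * (\<Sum>ys\<in>L. X s ys * tensor_gen C (X s) ys)) (at s within {0..})"
      if "0 \<le> s" for s
      unfolding Q_def
      by (auto intro!: derivative_eq_intros deriv that simp: L_def sum_negf sum_distrib_left ac_simps)
    show "- 2 * (\<Sum>ys\<in>L. X s ys * tensor_gen C (X s) ys) \<le> (2 * (card L * m * entrywise_l1 C)) * Q s" for s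
      using neg_sum_mult_tensor_gen_le[where X = "X s" and m = m and C = C]
      unfolding Q_def L_def by linarith
  qed (use \<open>0 \<le> t\<close> initial in \<open>auto simp: Q_def L_def intro: sum_nonneg\<close>)
  then show ?thesis
    using \<open>length xs = m\<close> finite_L sum_nonneg_eq_0_iff[of L "\<lambda>ys. (X t ys)\<^sup>2"]
    unfolding Q_def L_def by simp
qed

section \<open>Solution formula and sharpness\<close>

lemma tensor_ode_sol_eq_tensor_power_apply:
  assumes sol: "tensor_ode_sol C m D" and "0 \<le> t" and "length xs = m"
  shows "D t xs = tensor_power_apply (propagator C t) (D 0) xs"
proof -
  let ?Y = "\<lambda>s. tensor_power_apply (propagator C s) (D 0)"
  have "D t xs - ?Y t xs = 0"
  proof (rule tensor_gen_ode_unique[where X = "\<lambda>s ys. D s ys - ?Y s ys" and m = m])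
    fix ys :: "'a list" and s :: real
    assume "length ys = m" "0 \<le> s"
    with sol have "((\<lambda>s. D s ys) has_real_derivative - tensor_gen C (D s) ys) (at s within {0..})"
      unfolding tensor_ode_sol_iff by blast
    moreover have "((\<lambda>s. ?Y s ys) has_real_derivative - tensor_gen C (?Y s) ys) (at s within {0..})"
      by (rule has_field_derivative_at_within, rule has_real_derivative_tensor_power_apply,
          rule has_real_derivative_propagator_nth)
    ultimately show "((\<lambda>s. D s ys - ?Y s ys) has_real_derivative
                 - tensor_gen C (\<lambda>ys. D s ys - ?Y s ys) ys) (at s within {0..})"
      unfolding tensor_gen_diff by (rule DERIV_diff[THEN DERIV_cong]) simp
  next
    show "D 0 ys - ?Y 0 ys = 0" for ys
      by (simp add: propagator_0 tensor_power_apply_mat_1)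
  qed (use assms in auto)
  then show ?thesis
    by simp
qed

lemma frob_cong: "(\<And>xs. length xs = m \<Longrightarrow> A xs = B xs) \<Longrightarrow> frob m A = frob m B"
  unfolding frob_def by (intro arg_cong[where f = sqrt] sum.cong) auto

lemma frob_tensor_ode_sol_le:
  assumes "tensor_ode_sol C m D" and "0 \<le> t"
  shows "frob m (D t) \<le> hnorm C t ^ m * frob m (D 0)"
proof -
  have "frob m (D t) = frob m (tensor_power_apply (propagator C t) (D 0))"
    by (rule frob_cong, rule tensor_ode_sol_eq_tensor_power_apply[OF assms])
  also have "\<dots> \<le> hnorm C t ^ m * frob m (D 0)"
    unfolding hnorm_eq_onorm_propagator by (rule frob_tensor_power_apply_le)
  finally show ?thesis .
qed

lemma power2_prod_list: "(prod_list (map f xs))\<^sup>2 = prod_list (map (\<lambda>x. (f x)\<^sup>2) xs)"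
  for f :: "'a \<Rightarrow> real"
  by (induction xs) (simp_all add: power_mult_distrib)

definition tensor_power_vec :: "nat \<Rightarrow> real^'n \<Rightarrow> 'n list \<Rightarrow> real" where
  "tensor_power_vec m w xs = (if length xs = m then prod_list (map (\<lambda>x. w $ x) xs) else 0)"

lemma tensor_power_vec_in_sym_tensors: "tensor_power_vec m w \<in> sym_tensors m"
  unfolding sym_tensors_def tensor_power_vec_def
  by (auto simp: prod_mset_prod_list[symmetric] mset_map dest: mset_eq_length)

lemma frob_tensor_power_vec: "frob m (tensor_power_vec m (w :: real^'n::finite)) = norm w ^ m"
proof -
  have "(\<Sum>xs | length xs = m. (tensor_power_vec m w xs)\<^sup>2) = (\<Sum>x\<in>UNIV. (w $ x)\<^sup>2) ^ m"
    by (simp add: tensor_power_vec_def power2_prod_list sum_lists_length_prod_list)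
  also have "\<dots> = ((norm w)\<^sup>2) ^ m"
    by (simp add: power2_norm_vec_eq_sum)
  also have "\<dots> = (norm w ^ m)\<^sup>2"
    by (simp flip: power_mult add: mult.commute)
  finally show ?thesis
    by (simp add: frob_def)
qed

lemma tensor_ode_sol_tensor_power_vec:
  "tensor_ode_sol C m (\<lambda>t. tensor_power_vec m (propagator C t *v v))"
  unfolding tensor_ode_sol_iff
proof (intro conjI allI impI tensor_power_vec_in_sym_tensors)
  fix xs :: "'a list" and t :: real
  assume "length xs = m" "0 \<le> t"
  let ?V = "\<lambda>ys. prod_list (map (\<lambda>y. v $ y) ys)"
  have rank_one: "tensor_power_vec m (propagator C s *v v) ys = tensor_power_apply (propagator C s) ?V ys"
    if "length ys = m" for s ys
    using that by (simp add: tensor_power_vec_def tensor_power_apply_prod_list)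
  have "((\<lambda>s. tensor_power_apply (propagator C s) ?V xs) has_real_derivative
      - tensor_gen C (tensor_power_apply (propagator C t) ?V) xs) (at t within {0..})"
    by (rule has_field_derivative_at_within, rule has_real_derivative_tensor_power_apply,
        rule has_real_derivative_propagator_nth)
  moreover have "tensor_gen C (tensor_power_apply (propagator C t) ?V) xs
      = tensor_gen C (tensor_power_vec m (propagator C t *v v)) xs"
    by (rule tensor_gen_cong) (simp add: rank_one \<open>length xs = m\<close>)
  ultimately show "((\<lambda>s. tensor_power_vec m (propagator C s *v v) xs) has_real_derivative
      - tensor_gen C (tensor_power_vec m (propagator C t *v v)) xs) (at t within {0..})"
    by (simp add: rank_one \<open>length xs = m\<close>)
qed

lemma onorm_power_le:
  fixes A :: "real^'n^'m"
  assumes "0 < k" and bound: "\<And>v. v \<noteq> 0 \<Longrightarrow> (norm (A *v v) / norm v) ^ k \<le> y"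
  shows "onorm (\<lambda>v. A *v v) ^ k \<le> y"
proof -
  have "(1 :: real^'n) \<noteq> 0"
    by (simp add: vec_eq_iff)
  from bound[OF this] have "0 \<le> y"
    by (rule order_trans[rotated]) simp
  have "norm (A *v v) \<le> root k y * norm v" for v
  proof (cases "v = 0")
    case False
    have "norm (A *v v) / norm v = root k ((norm (A *v v) / norm v) ^ k)"
      using \<open>0 < k\<close> by (simp add: real_root_power_cancel)
    also have "\<dots> \<le> root k y"
      using \<open>0 < k\<close> bound[OF False] by (simp add: real_root_le_iff)
    finally show ?thesis
      using False by (simp add: divide_le_eq)
  qed simp
  then have "onorm (\<lambda>v. A *v v) \<le> root k y"
    using \<open>0 \<le> y\<close> by (intro onorm_bound) (simp_all add: real_root_ge_zero)
  then have "onorm (\<lambda>v. A *v v) ^ k \<le> root k y ^ k"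
    by (rule power_mono) (simp add: onorm_pos_le)
  then show ?thesis
    using \<open>0 < k\<close> \<open>0 \<le> y\<close> by simp
qed

lemma Sup_frob_ratio_tensor_ode_sol:
  assumes "1 \<le> m" and "0 \<le> t"
  shows "Sup {frob m (D t) / frob m (D 0) | D. tensor_ode_sol C m D \<and> D 0 \<noteq> (\<lambda>_. 0)} = hnorm C t ^ m"
    (is "Sup ?S = _")
proof (rule cSup_eq_non_empty)
  have ratio_in: "(norm (propagator C t *v v) / norm v) ^ m \<in> ?S" if "v \<noteq> 0" for v
  proof -
    let ?D = "\<lambda>s. tensor_power_vec m (propagator C s *v v)"
    have "frob m (?D 0) \<noteq> 0"
      using that by (simp add: frob_tensor_power_vec propagator_0)
    then have "?D 0 \<noteq> (\<lambda>_. 0)"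
      by (auto simp: frob_def)
    moreover have "frob m (?D t) / frob m (?D 0) = (norm (propagator C t *v v) / norm v) ^ m"
      by (simp add: frob_tensor_power_vec propagator_0 power_divide)
    ultimately show ?thesis
      using tensor_ode_sol_tensor_power_vec[of C m v] by (intro CollectI exI[of _ ?D]) auto
  qed
  show "?S \<noteq> {}"
    using ratio_in[of 1] by (auto simp: vec_eq_iff)
  show "x \<le> hnorm C t ^ m" if x_in: "x \<in> ?S" for x
  proof -
    obtain D where x: "x = frob m (D t) / frob m (D 0)" and "tensor_ode_sol C m D"
      using x_in by blast
    then have "frob m (D t) \<le> hnorm C t ^ m * frob m (D 0)"
      using frob_tensor_ode_sol_le \<open>0 \<le> t\<close> by blast
    moreover have "0 \<le> frob m (D 0)"
      by (simp add: frob_def sum_nonneg)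
    ultimately show ?thesis
      using hnorm_nonneg[of C t] by (auto simp: x divide_le_eq mult.commute)
  qed
  show "hnorm C t ^ m \<le> y" if "\<And>x. x \<in> ?S \<Longrightarrow> x \<le> y" for y
    unfolding hnorm_eq_onorm_propagator using \<open>1 \<le> m\<close> that ratio_in
    by (intro onorm_power_le) auto
qed

theorem theorem6p1:
  fixes C :: "real^'n^'n" and m :: nat
  assumes "conditionA C" and "m \<ge> 1"
  shows "(\<forall>D t. tensor_ode_sol C m D \<longrightarrow> t \<ge> 0 \<longrightarrow>
            frob m (D t) \<le> hnorm C t ^ m * frob m (D 0)) \<and>
         (\<forall>t\<ge>0. Sup {frob m (D t) / frob m (D 0) | D.
                      tensor_ode_sol C m D \<and> D 0 \<noteq> (\<lambda>_. 0)} = hnorm C t ^ m)"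
  using frob_tensor_ode_sol_le Sup_frob_ratio_tensor_ode_sol[OF \<open>m \<ge> 1\<close>] by blast

end
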